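(* Let $\mathbb{F}$ be a field and $A$ a matrix over $\mathbb{F}$ of dual tree-depth at most $d$. Then there is a $(d+3,\mathbb{F})$-matrix-tree $T(A)$ such that $A=A(T(A))$ (identifying the rows of $A$ with the nodes labelled $L_R$ and the columns with the nodes labelled $L_C$).
   Context: The depth of a rooted tree is the number of edges on a longest root-to-leaf path; a rooted forest's depth is the maximum depth of its components. An elimination forest of a graph $G$ is a rooted forest $F$ with $V(F)=V(G)$ such that every edge of $G$ joins a vertex to one of its ancestors in $F$; the tree-depth $\mathrm{td}(G)$ is the minimum of $\mathrm{depth}(F)+1$ over elimination forests. The dual graph $G_D(A)$ has the rows of $A$ as vertices, two rows adjacent iff some column has non-zero entries in both; the dual tree-depth of $A$ is $\mathrm{td}(G_D(A))$. A $(d,\mathbb{F})$-matrix-tree is a rooted tree of depth at most $d$ with unary labels from $\{L_R,L_C\}\cup\{L_{i,\alpha}: i\in\{0,\dots,d\},\alpha\in\mathbb{F}\}$ such that: every node labelled $L_C$ is a leaf; every other non-root node is labelled $L_R$; and each $L_C$-leaf at distance $k\le d$ from the root carries, for each $i\in\{0,\dots,k-1\}$, exactly one label $L_{i,\alpha}$. The matrix $A(T)$ has rows the $L_R$-nodes, columns the $L_C$-nodes, and entry at $(r,c)$ equal to $0$ if $r$ is not an ancestor of $c$, and equal to the unique $\alpha$ with $c$ labelled $L_{i,\alpha}$ if $r$ is an ancestor of $c$ at distance $i$ from the root. *)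

theory Defs
  imports Main
begin

text \<open>A rooted forest on a vertex set V is given by a parent map p (None = root).
  anc p u v means: u is a proper ancestor of v.\<close>

definition anc :: "('v \<Rightarrow> 'v option) \<Rightarrow> 'v \<Rightarrow> 'v \<Rightarrow> bool" where
  "anc p u v \<longleftrightarrow> (v, u) \<in> {(x, y). p x = Some y}\<^sup>+"

text \<open>Distance of a vertex from the root of its component = number of proper ancestors.\<close>
definition node_dist :: "('v \<Rightarrow> 'v option) \<Rightarrow> 'v \<Rightarrow> nat" where
  "node_dist p v = card {u. anc p u v}"

definition rooted_forest :: "'v set \<Rightarrow> ('v \<Rightarrow> 'v option) \<Rightarrow> bool" where
  "rooted_forest V p \<longleftrightarrow> finite V
     \<and> (\<forall>v\<in>V. \<forall>u. p v = Some u \<longrightarrow> u \<in> V)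
     \<and> (\<forall>v\<in>V. \<not> anc p v v)"

definition forest_depth_le :: "'v set \<Rightarrow> ('v \<Rightarrow> 'v option) \<Rightarrow> nat \<Rightarrow> bool" where
  "forest_depth_le V p k \<longleftrightarrow> (\<forall>v\<in>V. node_dist p v \<le> k)"

definition dual_adj :: "'r set \<Rightarrow> 'c set \<Rightarrow> ('r \<Rightarrow> 'c \<Rightarrow> 'a::zero) \<Rightarrow> 'r \<Rightarrow> 'r \<Rightarrow> bool" where
  "dual_adj R C A r s \<longleftrightarrow> r \<in> R \<and> s \<in> R \<and> r \<noteq> s \<and> (\<exists>c\<in>C. A r c \<noteq> 0 \<and> A s c \<noteq> 0)"

definition elimination_forest ::
  "'r set \<Rightarrow> 'c set \<Rightarrow> ('r \<Rightarrow> 'c \<Rightarrow> 'a::zero) \<Rightarrow> ('r \<Rightarrow> 'r option) \<Rightarrow> bool" where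
  "elimination_forest R C A p \<longleftrightarrow> rooted_forest R p
     \<and> (\<forall>r s. dual_adj R C A r s \<longrightarrow> anc p r s \<or> anc p s r)"

definition dual_td_le :: "'r set \<Rightarrow> 'c set \<Rightarrow> ('r \<Rightarrow> 'c \<Rightarrow> 'a::zero) \<Rightarrow> nat \<Rightarrow> bool" where
  "dual_td_le R C A d \<longleftrightarrow>
     (\<exists>p k. elimination_forest R C A p \<and> forest_depth_le R p k \<and> k + 1 \<le> d)"

datatype 'a mt_label = LR | LC | LI nat 'a

definition is_leaf :: "'n set \<Rightarrow> ('n \<Rightarrow> 'n option) \<Rightarrow> 'n \<Rightarrow> bool" where
  "is_leaf N p v \<longleftrightarrow> (\<forall>w\<in>N. p w \<noteq> Some v)"

definition matrix_tree ::
  "nat \<Rightarrow> 'n set \<Rightarrow> 'n \<Rightarrow> ('n \<Rightarrow> 'n option) \<Rightarrow> ('n \<Rightarrow> 'a mt_label set) \<Rightarrow> bool" where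
  "matrix_tree d N rt p lab \<longleftrightarrow>
     finite N \<and> rt \<in> N \<and> p rt = None
     \<and> (\<forall>v\<in>N. v \<noteq> rt \<longrightarrow> (\<exists>u. p v = Some u \<and> u \<in> N))
     \<and> (\<forall>v\<in>N. \<not> anc p v v)
     \<and> (\<forall>v\<in>N. node_dist p v \<le> d)
     \<and> (\<forall>v\<in>N. LC \<in> lab v \<longrightarrow> is_leaf N p v)
     \<and> (\<forall>v\<in>N. v \<noteq> rt \<and> LC \<notin> lab v \<longrightarrow> LR \<in> lab v)
     \<and> (\<forall>v\<in>N. LC \<in> lab v \<longrightarrow> (\<forall>i < node_dist p v. \<exists>!\<alpha>. LI i \<alpha> \<in> lab v))"

definition mt_entry ::
  "('n \<Rightarrow> 'n option) \<Rightarrow> ('n \<Rightarrow> 'a::zero mt_label set) \<Rightarrow> 'n \<Rightarrow> 'n \<Rightarrow> 'a" where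
  "mt_entry p lab r c = (if anc p r c then (THE \<alpha>. LI (node_dist p r) \<alpha> \<in> lab c) else 0)"

end

theory Submission
  imports Defs
begin

(* Take an elimination forest F of the dual graph of depth at most d - 1 and add a new root
   above all its roots. The rows with a nonzero entry in a column c are pairwise adjacent in
   the dual graph, so they lie on a single root-to-leaf path of F; hang c as a leaf below the
   deepest of them (below the new root if the column is zero). Then every row r with
   A r c \<noteq> 0 is an ancestor of the leaf c, and the ancestors of c have pairwise different
   distances from the root, so c can store A r c in the label L_{i,A r c} with i the distance
   of r. The tree has depth at most d + 1; its nodes are finally renamed injectively into nat. *)

definition parent_closed :: "'v set \<Rightarrow> ('v \<Rightarrow> 'v option) \<Rightarrow> bool" where
  "parent_closed V p \<longleftrightarrow> (\<forall>v\<in>V. \<forall>u. p v = Some u \<longrightarrow> u \<in> V)"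

lemma rooted_forest_iff:
  "rooted_forest V p \<longleftrightarrow> finite V \<and> parent_closed V p \<and> (\<forall>v\<in>V. \<not> anc p v v)"
  unfolding rooted_forest_def parent_closed_def ..

lemma anc_induct [consumes 1, case_names parent step]:
  assumes "anc p u v"
    and "\<And>v. p v = Some u \<Longrightarrow> P v"
    and "\<And>v w. p v = Some w \<Longrightarrow> anc p u w \<Longrightarrow> P w \<Longrightarrow> P v"
  shows "P v"
  using assms(1) unfolding anc_def
proof (induction rule: converse_trancl_induct)
  case (base v)
  then show ?case using assms(2) by simp
next
  case (step v w)
  then show ?case using assms(3) by (simp add: anc_def)
qed

lemma anc_parent_iff: "anc p u v \<longleftrightarrow> (\<exists>w. p v = Some w \<and> (w = u \<or> anc p u w))"
proof
  assume "anc p u v"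
  then show "\<exists>w. p v = Some w \<and> (w = u \<or> anc p u w)"
    by (induction rule: anc_induct) auto
next
  assume "\<exists>w. p v = Some w \<and> (w = u \<or> anc p u w)"
  then show "anc p u v"
    unfolding anc_def by (auto intro: trancl_into_trancl2)
qed

lemma anc_parentI: "p v = Some u \<Longrightarrow> anc p u v"
  by (subst anc_parent_iff) simp

lemma anc_parent_trans: "p v = Some w \<Longrightarrow> anc p u w \<Longrightarrow> anc p u v"
  by (subst anc_parent_iff) simp

lemma ancestors_parent: "p v = Some w \<Longrightarrow> {u. anc p u v} = insert w {u. anc p u w}"
  by (subst anc_parent_iff) auto

lemma not_anc_if_parent_None: "p v = None \<Longrightarrow> \<not> anc p u v"
  by (subst anc_parent_iff) simp

lemma anc_trans: "anc p a b \<Longrightarrow> anc p b c \<Longrightarrow> anc p a c"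
  unfolding anc_def by (rule trancl_trans)

lemma anc_linear:
  assumes "anc p a v" and "anc p b v"
  shows "a = b \<or> anc p a b \<or> anc p b a"
  using assms
proof (induction arbitrary: b rule: anc_induct)
  case (parent v)
  then show ?case using anc_parent_iff[of p b v] by auto
next
  case (step v w)
  then have "w = b \<or> anc p b w" using anc_parent_iff[of p b v] by auto
  then show ?case using step by auto
qed

lemma anc_in_parent_closed:
  assumes "parent_closed V p" and "anc p u v" and "v \<in> V"
  shows "u \<in> V"
  using assms(2,3) by (induction rule: anc_induct) (use assms(1) in \<open>auto simp: parent_closed_def\<close>)

lemma finite_ancestors:
  "finite V \<Longrightarrow> parent_closed V p \<Longrightarrow> v \<in> V \<Longrightarrow> finite {u. anc p u v}"
  by (rule finite_subset[of _ V]) (auto intro: anc_in_parent_closed)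

lemma node_dist_parent_le:
  "p v = Some w \<Longrightarrow> finite {u. anc p u w} \<Longrightarrow> node_dist p v \<le> node_dist p w + 1"
  unfolding node_dist_def by (simp add: ancestors_parent card_insert_if)

lemma node_dist_less:
  assumes "rooted_forest V p" and "v \<in> V" and "anc p u v"
  shows "node_dist p u < node_dist p v"
proof -
  have closed: "parent_closed V p" and "finite V" and acyclic: "\<forall>v\<in>V. \<not> anc p v v"
    using assms(1) by (auto simp: rooted_forest_iff)
  have "u \<in> V" using anc_in_parent_closed[OF closed assms(3,2)] .
  then have "{x. anc p x u} \<subset> {x. anc p x v}"
    using assms(3) acyclic by (auto intro: anc_trans)
  then show ?thesis
    unfolding node_dist_def
    by (rule psubset_card_mono[OF finite_ancestors[OF \<open>finite V\<close> closed assms(2)]])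
qed

lemma anc_eq_if_node_dist_eq:
  assumes "rooted_forest V p" and "v \<in> V" and "anc p a v" and "anc p b v"
    and "node_dist p a = node_dist p b"
  shows "a = b"
proof -
  have "a \<in> V" "b \<in> V"
    using assms(1-4) by (auto simp: rooted_forest_iff intro: anc_in_parent_closed)
  then have "\<not> anc p a b" "\<not> anc p b a"
    using node_dist_less[OF assms(1)] assms(5) by fastforce+
  then show ?thesis using anc_linear[OF assms(3,4)] by blast
qed

lemma chain_has_lowest:
  assumes "rooted_forest V p" and "S \<subseteq> V" and "S \<noteq> {}"
    and chain: "\<And>r s. r \<in> S \<Longrightarrow> s \<in> S \<Longrightarrow> r \<noteq> s \<Longrightarrow> anc p r s \<or> anc p s r"
  shows "\<exists>b\<in>S. \<forall>s\<in>S. s = b \<or> anc p s b"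
proof -
  have "finite S" using assms(1,2) finite_subset by (auto simp: rooted_forest_iff)
  then have "Max (node_dist p ` S) \<in> node_dist p ` S" using assms(3) by simp
  then obtain b where b: "b \<in> S" and "node_dist p b = Max (node_dist p ` S)" by auto
  with \<open>finite S\<close> have deepest: "node_dist p s \<le> node_dist p b" if "s \<in> S" for s
    using that by simp
  have "s = b \<or> anc p s b" if "s \<in> S" for s
  proof -
    have "\<not> anc p b s"
      using node_dist_less[OF assms(1), of s b] deepest[OF that] that assms(2) by auto
    then show ?thesis using chain[OF that b] by blast
  qed
  then show ?thesis using b by blast
qed

definition rename_parent :: "('v \<Rightarrow> 'w) \<Rightarrow> 'v set \<Rightarrow> ('v \<Rightarrow> 'v option) \<Rightarrow> 'w \<Rightarrow> 'w option" where
  "rename_parent g V p w = (if w \<in> g ` V then map_option g (p (inv_into V g w)) else None)"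

lemma rename_parent_image:
  "inj_on g V \<Longrightarrow> v \<in> V \<Longrightarrow> rename_parent g V p (g v) = map_option g (p v)"
  by (simp add: rename_parent_def)

lemma anc_rename_parent_image:
  assumes inj: "inj_on g V" and closed: "parent_closed V p" and "anc p u v" and "v \<in> V"
  shows "anc (rename_parent g V p) (g u) (g v)"
  using assms(3,4)
proof (induction rule: anc_induct)
  case (parent v)
  then show ?case by (auto simp: rename_parent_image[OF inj] intro: anc_parentI)
next
  case (step v w)
  then show ?case
    using closed by (auto simp: rename_parent_image[OF inj] parent_closed_def intro: anc_parent_trans)
qed

lemma anc_rename_parent_imageD:
  assumes inj: "inj_on g V" and closed: "parent_closed V p"
    and "anc (rename_parent g V p) x (g v)" and "v \<in> V"
  shows "\<exists>u. x = g u \<and> anc p u v"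
proof -
  let ?q = "rename_parent g V p"
  have "\<forall>v\<in>V. w = g v \<longrightarrow> (\<exists>u. x = g u \<and> anc p u v)" if "anc ?q x w" for w
    using that
  proof (induction rule: anc_induct)
    case (parent w)
    then show ?case by (force simp: rename_parent_image[OF inj] intro: anc_parentI)
  next
    case (step w w')
    show ?case
    proof (intro ballI impI)
      fix v assume "v \<in> V" and "w = g v"
      then obtain u where u: "p v = Some u" and "w' = g u"
        using step.hyps(1) by (auto simp: rename_parent_image[OF inj])
      moreover have "u \<in> V" using closed \<open>v \<in> V\<close> u by (auto simp: parent_closed_def)
      ultimately obtain y where "x = g y" and "anc p y u" using step.IH by blast
      then show "\<exists>u. x = g u \<and> anc p u v" using u by (auto intro: anc_parent_trans)
    qed
  qed
  then show ?thesis using assms(3,4) by blast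
qed

lemma ancestors_rename_parent:
  assumes "inj_on g V" and "parent_closed V p" and "v \<in> V"
  shows "{x. anc (rename_parent g V p) x (g v)} = g ` {u. anc p u v}"
  using anc_rename_parent_imageD[OF assms(1,2) _ assms(3)] anc_rename_parent_image[OF assms(1,2) _ assms(3)]
  by blast

lemma anc_rename_parent_iff:
  assumes "inj_on g V" and "parent_closed V p" and "u \<in> V" and "v \<in> V"
  shows "anc (rename_parent g V p) (g u) (g v) \<longleftrightarrow> anc p u v"
proof -
  have "{u. anc p u v} \<subseteq> V" using assms(2,4) by (auto intro: anc_in_parent_closed)
  then show ?thesis
    using ancestors_rename_parent[OF assms(1,2,4)] inj_on_image_mem_iff[OF assms(1,3)] by blast
qed

lemma node_dist_rename_parent:
  assumes "inj_on g V" and "parent_closed V p" and "v \<in> V"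
  shows "node_dist (rename_parent g V p) (g v) = node_dist p v"
proof -
  have "{u. anc p u v} \<subseteq> V" using assms(2,3) by (auto intro: anc_in_parent_closed)
  then have "inj_on g {u. anc p u v}" using assms(1) by (rule inj_on_subset[rotated])
  then show ?thesis
    unfolding node_dist_def ancestors_rename_parent[OF assms] by (rule card_image)
qed

definition matrix_tree_repr ::
  "nat \<Rightarrow> 'n set \<Rightarrow> 'n \<Rightarrow> ('n \<Rightarrow> 'n option) \<Rightarrow> ('n \<Rightarrow> 'a::zero mt_label set)
    \<Rightarrow> ('r \<Rightarrow> 'n) \<Rightarrow> ('c \<Rightarrow> 'n) \<Rightarrow> 'r set \<Rightarrow> 'c set \<Rightarrow> ('r \<Rightarrow> 'c \<Rightarrow> 'a) \<Rightarrow> bool" where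
  "matrix_tree_repr d N rt p lab \<rho> \<gamma> R C A \<longleftrightarrow>
     matrix_tree d N rt p lab
     \<and> bij_betw \<rho> R {v \<in> N. LR \<in> lab v}
     \<and> bij_betw \<gamma> C {v \<in> N. LC \<in> lab v}
     \<and> (\<forall>r\<in>R. \<forall>c\<in>C. A r c = mt_entry p lab (\<rho> r) (\<gamma> c))"

lemma matrix_tree_mono: "matrix_tree d N rt p lab \<Longrightarrow> d \<le> e \<Longrightarrow> matrix_tree e N rt p lab"
  unfolding matrix_tree_def by (blast intro: le_trans)

lemma matrix_tree_repr_mono:
  "matrix_tree_repr d N rt p lab \<rho> \<gamma> R C A \<Longrightarrow> d \<le> e \<Longrightarrow> matrix_tree_repr e N rt p lab \<rho> \<gamma> R C A"
  unfolding matrix_tree_repr_def using matrix_tree_mono[of d N rt p lab e] by blast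

lemma matrix_tree_parent_closed:
  assumes "matrix_tree d N rt p lab"
  shows "parent_closed N p"
  unfolding parent_closed_def
proof (intro ballI allI impI)
  fix v u assume "v \<in> N" and "p v = Some u"
  moreover have "p rt = None" and "\<forall>v\<in>N. v \<noteq> rt \<longrightarrow> (\<exists>u. p v = Some u \<and> u \<in> N)"
    using assms unfolding matrix_tree_def by blast+
  ultimately show "u \<in> N" by (cases "v = rt") auto
qed

lemma matrix_tree_rename:
  assumes mt: "matrix_tree d N rt p lab" and inj: "inj_on g N"
  shows "matrix_tree d (g ` N) (g rt) (rename_parent g N p) (lab \<circ> inv_into N g)"
proof -
  let ?q = "rename_parent g N p"
  have closed: "parent_closed N p" using mt by (rule matrix_tree_parent_closed)
  have "rt \<in> N" using mt by (simp add: matrix_tree_def)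
  then have rt_image: "\<And>v. v \<in> N \<Longrightarrow> g v = g rt \<longleftrightarrow> v = rt"
    using inj by (auto dest: inj_onD)
  have "is_leaf (g ` N) ?q (g v)" if "v \<in> N" and "is_leaf N p v" for v
    unfolding is_leaf_def ball_simps(9)
  proof (intro ballI notI)
    fix w assume "w \<in> N" and "?q (g w) = Some (g v)"
    then obtain u where "p w = Some u" and "g u = g v" by (auto simp: rename_parent_image[OF inj])
    moreover from this have "u \<in> N" using closed \<open>w \<in> N\<close> by (auto simp: parent_closed_def)
    ultimately have "p w = Some v" using inj_onD[OF inj] \<open>v \<in> N\<close> by metis
    then show False using \<open>is_leaf N p v\<close> \<open>w \<in> N\<close> by (auto simp: is_leaf_def)
  qed
  moreover have "\<exists>u. ?q (g v) = Some u \<and> u \<in> g ` N" if "v \<in> N" and "\<exists>u. p v = Some u \<and> u \<in> N" for v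
    using that by (force simp: rename_parent_image[OF inj])
  ultimately show ?thesis
    using mt unfolding matrix_tree_def ball_simps(9) comp_apply
    by (simp add: inj rename_parent_image rt_image anc_rename_parent_iff[OF inj closed]
        node_dist_rename_parent[OF inj closed])
qed

lemma mt_entry_rename:
  assumes "inj_on g N" and "parent_closed N p" and "u \<in> N" and "v \<in> N"
  shows "mt_entry (rename_parent g N p) (lab \<circ> inv_into N g) (g u) (g v) = mt_entry p lab u v"
  using assms by (simp add: mt_entry_def anc_rename_parent_iff node_dist_rename_parent)

lemma matrix_tree_repr_rename:
  assumes repr: "matrix_tree_repr d N rt p lab \<rho> \<gamma> R C A" and inj: "inj_on g N"
  shows "matrix_tree_repr d (g ` N) (g rt) (rename_parent g N p) (lab \<circ> inv_into N g)
           (g \<circ> \<rho>) (g \<circ> \<gamma>) R C A"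
proof -
  have mt: "matrix_tree d N rt p lab"
    and \<rho>: "bij_betw \<rho> R {v \<in> N. LR \<in> lab v}" and \<gamma>: "bij_betw \<gamma> C {v \<in> N. LC \<in> lab v}"
    and entries: "\<forall>r\<in>R. \<forall>c\<in>C. A r c = mt_entry p lab (\<rho> r) (\<gamma> c)"
    using repr unfolding matrix_tree_repr_def by blast+
  have labelled_image: "{v \<in> g ` N. l \<in> (lab \<circ> inv_into N g) v} = g ` {v \<in> N. l \<in> lab v}" for l
    using inj by auto
  have g_bij: "bij_betw g {v \<in> N. l \<in> lab v} (g ` {v \<in> N. l \<in> lab v})" for l
    using inj by (auto intro: inj_on_imp_bij_betw inj_on_subset)
  have "A r c = mt_entry (rename_parent g N p) (lab \<circ> inv_into N g) (g (\<rho> r)) (g (\<gamma> c))"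
    if "r \<in> R" and "c \<in> C" for r c
    using entries that bij_betwE[OF \<rho>] bij_betwE[OF \<gamma>]
    by (simp add: mt_entry_rename[OF inj matrix_tree_parent_closed[OF mt]])
  then show ?thesis
    unfolding matrix_tree_repr_def labelled_image
    using matrix_tree_rename[OF mt inj] bij_betw_trans[OF \<rho> g_bij] bij_betw_trans[OF \<gamma> g_bij]
    by simp
qed

lemma ex_matrix_tree_repr_nat:
  assumes "matrix_tree_repr d N rt p lab \<rho> \<gamma> R C A"
  shows "\<exists>(N' :: nat set) rt' p' (lab' :: nat \<Rightarrow> 'a::zero mt_label set) \<rho>' \<gamma>'.
           matrix_tree_repr d N' rt' p' lab' \<rho>' \<gamma>' R C A"
proof -
  have "finite N" using assms unfolding matrix_tree_repr_def matrix_tree_def by blast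
  then obtain g :: "_ \<Rightarrow> nat" where "inj_on g N"
    using finite_imp_inj_to_nat_seg by blast
  then show ?thesis using matrix_tree_repr_rename[OF assms] by blast
qed

(* None is the new root, Some (Inl r) the row r and Some (Inr c) the column c. *)
fun row_column_tree ::
  "('r \<Rightarrow> 'r option) \<Rightarrow> ('c \<Rightarrow> 'r option) \<Rightarrow> ('r + 'c) option \<Rightarrow> ('r + 'c) option option" where
  "row_column_tree p t None = None"
| "row_column_tree p t (Some (Inl r)) = Some (map_option Inl (p r))"
| "row_column_tree p t (Some (Inr c)) = Some (map_option Inl (t c))"

lemma anc_row_column_tree_row:
  assumes "anc (row_column_tree p t) x (Some (Inl s))"
  shows "x = None \<or> (\<exists>r. x = Some (Inl r) \<and> anc p r s)"
proof -
  have "\<forall>s. y = Some (Inl s) \<longrightarrow> x = None \<or> (\<exists>r. x = Some (Inl r) \<and> anc p r s)"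
    if "anc (row_column_tree p t) x y" for y
    using that
  proof (induction rule: anc_induct)
    case (parent y)
    show ?case
    proof (intro allI impI)
      fix s assume "y = Some (Inl s)"
      then have "x = map_option Inl (p s)" using parent by simp
      then show "x = None \<or> (\<exists>r. x = Some (Inl r) \<and> anc p r s)"
        by (cases "p s") (auto intro: anc_parentI)
    qed
  next
    case (step y z)
    show ?case
    proof (intro allI impI)
      fix s assume "y = Some (Inl s)"
      then have z: "z = map_option Inl (p s)" using step.hyps(1) by simp
      show "x = None \<or> (\<exists>r. x = Some (Inl r) \<and> anc p r s)"
      proof (cases "p s")
        case None
        then show ?thesis using z step.hyps(2) by (simp add: not_anc_if_parent_None)
      next
        case (Some r)
        then show ?thesis using z step.IH by (auto intro: anc_trans anc_parentI)
      qed
    qed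
  qed
  then show ?thesis using assms by blast
qed

lemma anc_row_column_tree_rows_iff:
  "anc (row_column_tree p t) (Some (Inl r)) (Some (Inl s)) \<longleftrightarrow> anc p r s"
proof
  assume "anc (row_column_tree p t) (Some (Inl r)) (Some (Inl s))"
  then show "anc p r s" by (auto dest: anc_row_column_tree_row)
next
  assume "anc p r s"
  then show "anc (row_column_tree p t) (Some (Inl r)) (Some (Inl s))"
  proof (induction rule: anc_induct)
    case (parent s)
    show ?case by (rule anc_parentI) (simp add: parent)
  next
    case (step s w)
    show ?case by (rule anc_parent_trans[where w = "Some (Inl w)"]) (simp_all add: step)
  qed
qed

lemma anc_row_column_tree_column:
  "anc (row_column_tree p t) x (Some (Inr c)) \<longleftrightarrow>
     (case t c of
        None \<Rightarrow> x = None
      | Some r \<Rightarrow> x = Some (Inl r) \<or> anc (row_column_tree p t) x (Some (Inl r)))"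
  by (subst anc_parent_iff) (auto simp: not_anc_if_parent_None split: option.split)

lemma not_anc_row_column_tree_column: "\<not> anc (row_column_tree p t) (Some (Inr c)) v"
proof
  assume anc: "anc (row_column_tree p t) (Some (Inr c)) v"
  consider "v = None" | s where "v = Some (Inl s)" | c' where "v = Some (Inr c')"
    by (metis option.exhaust sum.exhaust)
  then show False
  proof cases
    case 1
    then show ?thesis using anc by (simp add: not_anc_if_parent_None)
  next
    case 2
    then show ?thesis using anc by (auto dest: anc_row_column_tree_row)
  next
    case 3
    then show ?thesis
      using anc
      by (auto simp: anc_row_column_tree_column split: option.splits dest: anc_row_column_tree_row)
  qed
qed

lemma node_dist_row_column_tree_row:
  fixes p :: "'r \<Rightarrow> 'r option" and t :: "'c \<Rightarrow> 'r option"
  assumes "finite {r. anc p r s}"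
  shows "node_dist (row_column_tree p t) (Some (Inl s)) \<le> node_dist p s + 1"
proof -
  let ?T = "row_column_tree p t"
  let ?row = "Some \<circ> Inl :: 'r \<Rightarrow> ('r + 'c) option"
  have ancestors: "{x. anc ?T x (Some (Inl s))} \<subseteq> insert None (?row ` {r. anc p r s})"
    by (auto dest: anc_row_column_tree_row)
  have "node_dist ?T (Some (Inl s)) \<le> card (insert None (?row ` {r. anc p r s}))"
    unfolding node_dist_def by (rule card_mono[OF _ ancestors]) (simp add: assms)
  also have "\<dots> \<le> card (?row ` {r. anc p r s}) + 1"
    using assms by (simp add: card_insert_if)
  also have "\<dots> \<le> node_dist p s + 1"
    unfolding node_dist_def using card_image_le[OF assms] by simp
  finally show ?thesis .
qed

locale dual_elimination_forest =
  fixes R :: "'r set" and C :: "'c set" and A :: "'r \<Rightarrow> 'c \<Rightarrow> 'a::zero" and p :: "'r \<Rightarrow> 'r option"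
  assumes finite_columns: "finite C"
    and elimination_forest: "elimination_forest R C A p"
begin

lemma rooted_forest: "rooted_forest R p"
  using elimination_forest unfolding elimination_forest_def by blast

definition support :: "'c \<Rightarrow> 'r set" where
  "support c = {r \<in> R. A r c \<noteq> 0}"

lemma support_chain:
  "c \<in> C \<Longrightarrow> r \<in> support c \<Longrightarrow> s \<in> support c \<Longrightarrow> r \<noteq> s \<Longrightarrow> anc p r s \<or> anc p s r"
  using elimination_forest unfolding elimination_forest_def dual_adj_def support_def by blast

definition lowest :: "'c \<Rightarrow> 'r option" where
  "lowest c = (if support c = {} then None
     else Some (SOME b. b \<in> support c \<and> (\<forall>s\<in>support c. s = b \<or> anc p s b)))"

lemma lowest_None: "lowest c = None \<Longrightarrow> support c = {}"
  by (simp add: lowest_def split: if_splits)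

lemma lowest_Some:
  assumes "c \<in> C" and "lowest c = Some b"
  shows "b \<in> support c" and "\<forall>s\<in>support c. s = b \<or> anc p s b"
proof -
  let ?lowest = "\<lambda>b. b \<in> support c \<and> (\<forall>s\<in>support c. s = b \<or> anc p s b)"
  have "support c \<noteq> {}" using assms(2) by (auto simp: lowest_def)
  moreover have "support c \<subseteq> R" by (auto simp: support_def)
  ultimately have "\<exists>b. b \<in> support c \<and> (\<forall>s\<in>support c. s = b \<or> anc p s b)"
    using chain_has_lowest[OF rooted_forest _ _ support_chain[OF assms(1)]] by blast
  then have "?lowest (SOME b. ?lowest b)" by (rule someI_ex)
  moreover have "b = (SOME b. ?lowest b)"
    using assms(2) \<open>support c \<noteq> {}\<close> by (simp add: lowest_def)
  ultimately show "b \<in> support c" and "\<forall>s\<in>support c. s = b \<or> anc p s b" by blast+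
qed

abbreviation tree :: "('r + 'c) option \<Rightarrow> ('r + 'c) option option" where
  "tree \<equiv> row_column_tree p lowest"

definition nodes :: "('r + 'c) option set" where
  "nodes = insert None (Some ` (Inl ` R \<union> Inr ` C))"

lemma nodes_cases [consumes 1, case_names root row column]:
  assumes "v \<in> nodes"
  obtains "v = None" | r where "r \<in> R" and "v = Some (Inl r)" | c where "c \<in> C" and "v = Some (Inr c)"
  using assms by (auto simp: nodes_def)

lemma anc_tree_if_nonzero:
  assumes "r \<in> R" and "c \<in> C" and "A r c \<noteq> 0"
  shows "anc tree (Some (Inl r)) (Some (Inr c))"
proof -
  have "r \<in> support c" using assms by (simp add: support_def)
  then obtain b where b: "lowest c = Some b" using lowest_None by fastforce
  then have "r = b \<or> anc p r b" using lowest_Some[OF assms(2) b] \<open>r \<in> support c\<close> by blast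
  then show ?thesis
    using b by (auto simp: anc_row_column_tree_column anc_row_column_tree_rows_iff)
qed

lemma rooted_forest_tree: "rooted_forest nodes tree"
  unfolding rooted_forest_iff
proof (intro conjI)
  show "finite nodes"
    using rooted_forest finite_columns by (simp add: nodes_def rooted_forest_iff)
  show "parent_closed nodes tree"
    unfolding parent_closed_def
  proof (intro ballI allI impI)
    fix v u assume "v \<in> nodes" and "tree v = Some u"
    moreover have "map_option Inl (p r) \<in> nodes" if "r \<in> R" for r
      using rooted_forest that
      by (cases "p r") (auto simp: nodes_def rooted_forest_iff parent_closed_def)
    moreover have "map_option Inl (lowest c) \<in> nodes" if "c \<in> C" for c
      using lowest_Some(1)[OF that]
      by (cases "lowest c") (auto simp: nodes_def support_def)
    ultimately show "u \<in> nodes"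
      by (cases rule: nodes_cases) auto
  qed
  show "\<forall>v\<in>nodes. \<not> anc tree v v"
    using rooted_forest
    by (auto simp: nodes_def rooted_forest_iff anc_row_column_tree_rows_iff
        not_anc_row_column_tree_column not_anc_if_parent_None)
qed

lemma node_dist_tree_row_le:
  assumes "forest_depth_le R p k" and "r \<in> R"
  shows "node_dist tree (Some (Inl r)) \<le> k + 1"
proof -
  have "finite {s. anc p s r}"
    using rooted_forest assms(2) by (auto simp: rooted_forest_iff intro: finite_ancestors)
  then show ?thesis
    using node_dist_row_column_tree_row[of p r lowest] assms by (auto simp: forest_depth_le_def)
qed

lemma node_dist_tree_le:
  assumes depth: "forest_depth_le R p k" and "v \<in> nodes"
  shows "node_dist tree v \<le> k + 2"
proof -
  have "finite nodes" and "parent_closed nodes tree"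
    using rooted_forest_tree by (auto simp: rooted_forest_iff)
  then have finite_anc: "\<And>v. v \<in> nodes \<Longrightarrow> finite {u. anc tree u v}"
    by (rule finite_ancestors)
  have root_dist: "node_dist tree None = 0"
    by (simp add: node_dist_def not_anc_if_parent_None)
  from \<open>v \<in> nodes\<close> show ?thesis
  proof (cases rule: nodes_cases)
    case root
    then show ?thesis using root_dist by simp
  next
    case (row r)
    then show ?thesis using node_dist_tree_row_le[OF depth] by fastforce
  next
    case (column c)
    show ?thesis
    proof (cases "lowest c")
      case None
      then have "node_dist tree v \<le> node_dist tree None + 1"
        using column finite_anc[of None] by (intro node_dist_parent_le) (simp_all add: nodes_def)
      then show ?thesis using root_dist by simp
    next
      case (Some b)
      then have "b \<in> R" using lowest_Some(1)[OF column(1)] by (simp add: support_def)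
      then have "node_dist tree v \<le> node_dist tree (Some (Inl b)) + 1"
        using column Some finite_anc[of "Some (Inl b)"]
        by (intro node_dist_parent_le) (simp_all add: nodes_def)
      then show ?thesis using node_dist_tree_row_le[OF depth \<open>b \<in> R\<close>] by simp
    qed
  qed
qed

(* Arbitrary unless some row ancestor of c has distance i, which is then unique. *)
definition row_at :: "'c \<Rightarrow> nat \<Rightarrow> 'r" where
  "row_at c i = (SOME r. r \<in> R \<and> anc tree (Some (Inl r)) (Some (Inr c))
                   \<and> node_dist tree (Some (Inl r)) = i)"

lemma row_at_node_dist:
  assumes "r \<in> R" and "c \<in> C" and "anc tree (Some (Inl r)) (Some (Inr c))"
  shows "row_at c (node_dist tree (Some (Inl r))) = r"
proof -
  let ?i = "node_dist tree (Some (Inl r))"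
  let ?at = "\<lambda>r'. r' \<in> R \<and> anc tree (Some (Inl r')) (Some (Inr c)) \<and> node_dist tree (Some (Inl r')) = ?i"
  have "?at (row_at c ?i)"
    unfolding row_at_def by (rule someI[of ?at r]) (use assms in simp)
  moreover have "Some (Inr c) \<in> nodes" using assms(2) by (simp add: nodes_def)
  ultimately show ?thesis
    using anc_eq_if_node_dist_eq[OF rooted_forest_tree _ _ assms(3)] by blast
qed

fun labels :: "('r + 'c) option \<Rightarrow> 'a mt_label set" where
  "labels None = {}"
| "labels (Some (Inl r)) = {LR}"
| "labels (Some (Inr c)) = insert LC (range (\<lambda>i. LI i (A (row_at c i) c)))"

lemma LI_in_labels_iff: "LI i \<alpha> \<in> labels (Some (Inr c)) \<longleftrightarrow> \<alpha> = A (row_at c i) c"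
  by auto

lemma mt_entry_tree:
  assumes "r \<in> R" and "c \<in> C"
  shows "mt_entry tree labels (Some (Inl r)) (Some (Inr c)) = A r c"
proof (cases "anc tree (Some (Inl r)) (Some (Inr c))")
  case True
  then show ?thesis
    using row_at_node_dist[OF assms True]
    by (simp add: mt_entry_def LI_in_labels_iff del: labels.simps)
next
  case False
  then show ?thesis
    using anc_tree_if_nonzero[OF assms] by (auto simp: mt_entry_def)
qed

lemma matrix_tree_tree:
  assumes "forest_depth_le R p k"
  shows "matrix_tree (k + 2) nodes None tree labels"
proof -
  have "finite nodes" and closed: "parent_closed nodes tree" and "\<forall>v\<in>nodes. \<not> anc tree v v"
    using rooted_forest_tree by (simp_all add: rooted_forest_iff)
  moreover have "\<exists>u. tree v = Some u \<and> u \<in> nodes" if "v \<in> nodes" and "v \<noteq> None" for v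
  proof -
    from that obtain u where "tree v = Some u" by (cases rule: nodes_cases) auto
    then show ?thesis using closed \<open>v \<in> nodes\<close> unfolding parent_closed_def by blast
  qed
  moreover have "is_leaf nodes tree v" if "v \<in> nodes" and "LC \<in> labels v" for v
    using that by (cases rule: nodes_cases) (auto simp: is_leaf_def nodes_def)
  moreover have "LR \<in> labels v" if "v \<in> nodes" and "v \<noteq> None" and "LC \<notin> labels v" for v
    using that by (cases rule: nodes_cases) auto
  moreover have "\<exists>!\<alpha>. LI i \<alpha> \<in> labels v" if "v \<in> nodes" and "LC \<in> labels v" for v i
    using that by (cases rule: nodes_cases) auto
  ultimately show ?thesis
    unfolding matrix_tree_def using node_dist_tree_le[OF assms] by (simp add: nodes_def)
qed

lemma matrix_tree_repr_tree:
  assumes "forest_depth_le R p k"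
  shows "matrix_tree_repr (k + 2) nodes None tree labels (Some \<circ> Inl) (Some \<circ> Inr) R C A"
proof -
  have "{v \<in> nodes. LR \<in> labels v} = (Some \<circ> Inl) ` R"
    and "{v \<in> nodes. LC \<in> labels v} = (Some \<circ> Inr) ` C"
    by (auto simp: nodes_def)
  then show ?thesis
    unfolding matrix_tree_repr_def using matrix_tree_tree[OF assms]
    by (simp add: mt_entry_tree inj_on_def bij_betw_imageI)
qed

end

theorem lemma11:
  fixes R :: "'r set" and C :: "'c set" and A :: "'r \<Rightarrow> 'c \<Rightarrow> 'a::field" and d :: nat
  assumes "finite R" and "finite C"
    and "dual_td_le R C A d"
  shows "\<exists>(N :: nat set) rt p (lab :: nat \<Rightarrow> 'a mt_label set) \<rho> \<gamma>.
           matrix_tree (d + 3) N rt p lab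
         \<and> bij_betw \<rho> R {v \<in> N. LR \<in> lab v}
         \<and> bij_betw \<gamma> C {v \<in> N. LC \<in> lab v}
         \<and> (\<forall>r\<in>R. \<forall>c\<in>C. A r c = mt_entry p lab (\<rho> r) (\<gamma> c))"
proof -
  obtain p k where elim: "elimination_forest R C A p" and depth: "forest_depth_le R p k"
    and "k + 1 \<le> d"
    using assms(3) unfolding dual_td_le_def by blast
  interpret dual_elimination_forest R C A p
    by (rule dual_elimination_forest.intro[OF assms(2) elim])
  have "matrix_tree_repr (d + 3) nodes None tree labels (Some \<circ> Inl) (Some \<circ> Inr) R C A"
    using matrix_tree_repr_tree[OF depth] by (rule matrix_tree_repr_mono) (use \<open>k + 1 \<le> d\<close> in simp)
  from ex_matrix_tree_repr_nat[OF this] show ?thesis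
    unfolding matrix_tree_repr_def .
qed

end
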